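(* Let $I$ and $J$ be componentwise polymatroidal monomial ideals in $K[x,y]$. Then $IJ$ is also componentwise polymatroidal. In particular, all powers of a componentwise polymatroidal ideal in $K[x,y]$ are componentwise polymatroidal.
   Context: $G(I)$ is the minimal monomial generating set. A monomial ideal generated in a single degree is polymatroidal if for all $u,v\in G(I)$ and all variables $z$ with $\deg_{z}(u)>\deg_{z}(v)$ ($\deg_z$ = exponent of $z$) there exists a variable $w$ with $\deg_{w}(u)<\deg_{w}(v)$ and $w(u/z)\in I$. $I_{\langle j\rangle}$ is the ideal generated by all degree-$j$ monomials of $I$; $I$ is componentwise polymatroidal if every nonzero $I_{\langle j\rangle}$ is polymatroidal. *)

theory Defs
  imports Main
begin

text \<open>Monomials of K[x,y] are identified with their exponent vectors
  (functions from the two variables to nat). A monomial ideal of K[x,y] is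
  determined by the set of monomials it contains; this set is closed under
  multiplication by arbitrary monomials (upward closed for divisibility).\<close>

datatype var = X | Y

type_synonym mon = "var \<Rightarrow> nat"

definition mdeg :: "mon \<Rightarrow> nat" where
  "mdeg u = u X + u Y"

definition mdvd :: "mon \<Rightarrow> mon \<Rightarrow> bool" where
  "mdvd u w \<longleftrightarrow> (\<forall>z. u z \<le> w z)"

definition mmult :: "mon \<Rightarrow> mon \<Rightarrow> mon" where
  "mmult u v = (\<lambda>z. u z + v z)"

definition mon_ideal :: "mon set \<Rightarrow> bool" where
  "mon_ideal I \<longleftrightarrow> (\<forall>u\<in>I. \<forall>w. mdvd u w \<longrightarrow> w \<in> I)"

definition gens :: "mon set \<Rightarrow> mon set" where
  "gens I = {u \<in> I. \<forall>v\<in>I. mdvd v u \<longrightarrow> v = u}"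

definition mulvar :: "var \<Rightarrow> mon \<Rightarrow> mon" where
  "mulvar w u = u(w := u w + 1)"

definition divvar :: "var \<Rightarrow> mon \<Rightarrow> mon" where
  "divvar z u = u(z := u z - 1)"

definition polymatroidal :: "mon set \<Rightarrow> bool" where
  "polymatroidal I \<longleftrightarrow>
     (\<exists>d. \<forall>u\<in>gens I. mdeg u = d) \<and>
     (\<forall>u\<in>gens I. \<forall>v\<in>gens I. \<forall>z. u z > v z \<longrightarrow>
        (\<exists>w. u w < v w \<and> mulvar w (divvar z u) \<in> I))"

definition comp :: "mon set \<Rightarrow> nat \<Rightarrow> mon set" where
  "comp I j = {w. \<exists>u\<in>I. mdeg u = j \<and> mdvd u w}"

definition cw_polymatroidal :: "mon set \<Rightarrow> bool" where
  "cw_polymatroidal I \<longleftrightarrow> (\<forall>j. comp I j \<noteq> {} \<longrightarrow> polymatroidal (comp I j))"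

definition mprod :: "mon set \<Rightarrow> mon set \<Rightarrow> mon set" where
  "mprod I J = {w. \<exists>u\<in>I. \<exists>v\<in>J. mdvd (mmult u v) w}"

primrec mpow :: "mon set \<Rightarrow> nat \<Rightarrow> mon set" where
  "mpow I 0 = UNIV"
| "mpow I (Suc n) = mprod I (mpow I n)"

end

theory Submission
  imports Defs
begin

text \<open>In two variables a monomial of degree j is determined by its X-exponent, and the exchange
  condition for the degree-j component of I says exactly that the X-exponents of the degree-j
  monomials of I form an interval; so I is componentwise polymatroidal iff all its degree slices
  are intervals. A degree-j monomial of IJ is u v with u in I of some degree a and v in J of
  degree j - a. For fixed a the attainable X-exponents form a sum of two intervals, again an
  interval. Consecutive values of a give overlapping intervals: if v' in J has degree j - a - 1,
  then u (x v') and (x u) v' have the same X-exponent.\<close>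

lemma mon_ext: "u X = w X \<Longrightarrow> u Y = w Y \<Longrightarrow> u = (w::mon)"
  by (rule ext, case_tac x) auto

lemma mon_eq_if_mdeg_eq: "mdeg u = mdeg w \<Longrightarrow> u X = w X \<Longrightarrow> u = w"
  by (rule mon_ext) (auto simp: mdeg_def)

lemma mdvd_refl [simp]: "mdvd u u"
  by (simp add: mdvd_def)

lemma mdeg_le_if_mdvd: "mdvd u w \<Longrightarrow> mdeg u \<le> mdeg w"
  unfolding mdvd_def mdeg_def by (metis add_mono)

lemma eq_if_mdvd_mdeg_eq: "mdvd u w \<Longrightarrow> mdeg u = mdeg w \<Longrightarrow> u = w"
  unfolding mdvd_def mdeg_def by (rule mon_ext) (metis add_le_cancel_left add_le_cancel_right le_antisym)+

lemma mulvar_apply [simp]: "mulvar w u z = (if z = w then u z + 1 else u z)"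
  by (simp add: mulvar_def)

lemma divvar_apply [simp]: "divvar w u z = (if z = w then u z - 1 else u z)"
  by (simp add: divvar_def)

lemma mdeg_mulvar: "mdeg (mulvar w u) = mdeg u + 1"
  by (cases w) (simp_all add: mdeg_def)

lemma mdeg_mulvar_divvar [simp]: "0 < u z \<Longrightarrow> mdeg (mulvar w (divvar z u)) = mdeg u"
  by (cases w; cases z) (simp_all add: mdeg_def)

lemma mmult_apply: "mmult u v z = u z + v z"
  by (simp add: mmult_def)

lemma mdeg_mmult [simp]: "mdeg (mmult u v) = mdeg u + mdeg v"
  by (simp add: mdeg_def mmult_apply)

lemma mon_ideal_mulvar: "mon_ideal I \<Longrightarrow> u \<in> I \<Longrightarrow> mulvar z u \<in> I"
  unfolding mon_ideal_def mdvd_def by auto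

lemma mmult_mem_mprod: "u \<in> I \<Longrightarrow> v \<in> J \<Longrightarrow> mmult u v \<in> mprod I J"
  unfolding mprod_def using mdvd_refl by blast

lemma mprod_memE:
  assumes "mon_ideal I" and "w \<in> mprod I J"
  obtains u v where "u \<in> I" "v \<in> J" "w = mmult u v"
proof -
  from assms(2) obtain u v where uv: "u \<in> I" "v \<in> J" "mdvd (mmult u v) w"
    unfolding mprod_def by auto
  let ?u = "\<lambda>z. w z - v z"
  have "mdvd u ?u"
    using uv(3) unfolding mdvd_def mmult_def by (auto intro: add_le_imp_le_diff)
  with assms(1) uv(1) have "?u \<in> I"
    unfolding mon_ideal_def by auto
  moreover have "w = mmult ?u v"
    using uv(3) unfolding mdvd_def mmult_def by (intro ext) (metis add_leD2 le_add_diff_inverse2)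
  ultimately show ?thesis
    using that uv(2) by blast
qed

lemma mon_ideal_mprod: "mon_ideal (mprod I J)"
  unfolding mon_ideal_def mprod_def mdvd_def by (auto, meson order_trans)

lemma mon_ideal_UNIV: "mon_ideal UNIV"
  by (simp add: mon_ideal_def)

definition between :: "nat \<Rightarrow> nat \<Rightarrow> nat \<Rightarrow> bool" where
  "between a b c \<longleftrightarrow> min a c \<le> b \<and> b \<le> max a c"

lemma between_sym: "between a b c \<longleftrightarrow> between c b a"
  by (auto simp: between_def)

definition slices_convex :: "mon set \<Rightarrow> bool" where
  "slices_convex I \<longleftrightarrow> (\<forall>u\<in>I. \<forall>v\<in>I. \<forall>w. mdeg u = mdeg w \<longrightarrow> mdeg v = mdeg w \<longrightarrow>
      between (u X) (w X) (v X) \<longrightarrow> w \<in> I)"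

lemma gens_comp: "gens (comp I j) = {u \<in> I. mdeg u = j}"
proof (intro equalityI subsetI)
  fix u assume "u \<in> gens (comp I j)"
  then have minimal: "\<forall>v\<in>comp I j. mdvd v u \<longrightarrow> v = u" and "u \<in> comp I j"
    unfolding gens_def by auto
  then obtain u0 where "u0 \<in> I" "mdeg u0 = j" "mdvd u0 u"
    unfolding comp_def by auto
  moreover from this have "u0 \<in> comp I j"
    unfolding comp_def by auto
  ultimately show "u \<in> {u \<in> I. mdeg u = j}"
    using minimal by auto
next
  fix u assume u: "u \<in> {u \<in> I. mdeg u = j}"
  have "v = u" if "v \<in> comp I j" "mdvd v u" for v
  proof -
    from that(1) obtain u0 where "mdvd u0 v" "mdeg u0 = j"
      unfolding comp_def by auto
    then have "mdeg u \<le> mdeg v"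
      using u mdeg_le_if_mdvd by auto
    with that(2) show "v = u"
      by (simp add: eq_if_mdvd_mdeg_eq le_antisym mdeg_le_if_mdvd)
  qed
  with u show "u \<in> gens (comp I j)"
    unfolding gens_def comp_def by auto
qed

lemma mem_if_mem_comp: "w \<in> comp I (mdeg w) \<Longrightarrow> w \<in> I"
  unfolding comp_def using eq_if_mdvd_mdeg_eq by blast

lemma cw_polymatroidal_shift_XY:
  assumes "cw_polymatroidal I" and "u \<in> I" "v \<in> I" "mdeg u = mdeg v" "v X < u X"
  shows "mulvar Y (divvar X u) \<in> I"
proof -
  let ?j = "mdeg u"
  have gens: "u \<in> gens (comp I ?j)" "v \<in> gens (comp I ?j)"
    using assms(2-4) by (auto simp: gens_comp)
  then have "comp I ?j \<noteq> {}"
    unfolding gens_def by auto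
  with assms(1) have "polymatroidal (comp I ?j)"
    unfolding cw_polymatroidal_def by auto
  with gens assms(5) obtain w where w: "u w < v w" "mulvar w (divvar X u) \<in> comp I ?j"
    unfolding polymatroidal_def by blast
  from w(1) assms(5) have "w = Y"
    by (cases w) auto
  moreover have "mdeg (mulvar Y (divvar X u)) = mdeg u"
    using assms(5) by simp
  ultimately show ?thesis
    using w(2) mem_if_mem_comp by metis
qed

lemma cw_polymatroidal_slice_interval:
  assumes "cw_polymatroidal I" and "u \<in> I" "v \<in> I" "mdeg u = mdeg w" "mdeg v = mdeg w"
    and "u X \<le> w X" "w X \<le> v X"
  shows "w \<in> I"
  using assms(3,5,7)
proof (induction "v X - w X" arbitrary: v)
  case 0
  then have "v = w"
    by (intro mon_eq_if_mdeg_eq) auto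
  with "0.prems" show ?case
    by simp
next
  case (Suc g)
  let ?v = "mulvar Y (divvar X v)"
  have "u X < v X"
    using Suc.hyps assms(6) by linarith
  with assms Suc.prems have "?v \<in> I"
    by (intro cw_polymatroidal_shift_XY) auto
  moreover have "mdeg ?v = mdeg w" "g = ?v X - w X" "w X \<le> ?v X"
    using Suc.hyps Suc.prems by auto
  ultimately show ?case
    using Suc.hyps by blast
qed

lemma cw_polymatroidal_imp_slices_convex: "cw_polymatroidal I \<Longrightarrow> slices_convex I"
  unfolding slices_convex_def between_def
  by (metis cw_polymatroidal_slice_interval max_def min_def nle_le)

lemma slices_convex_imp_cw_polymatroidal:
  assumes "slices_convex I"
  shows "cw_polymatroidal I"
  unfolding cw_polymatroidal_def polymatroidal_def gens_comp
proof (intro allI impI conjI ballI)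
  fix j
  show "\<exists>d. \<forall>u\<in>{u \<in> I. mdeg u = j}. mdeg u = d"
    by auto
  fix u v z assume u: "u \<in> {u \<in> I. mdeg u = j}" and v: "v \<in> {u \<in> I. mdeg u = j}" and "v z < u z"
  then obtain w where w: "w \<noteq> z" "u w < v w"
    using that[of X] that[of Y] by (cases z) (auto simp: mdeg_def)
  let ?m = "mulvar w (divvar z u)"
  have "mdeg ?m = j"
    using u w \<open>v z < u z\<close> by (cases z; cases w) (auto simp: mdeg_def)
  moreover have "between (u X) (?m X) (v X)"
    using w \<open>v z < u z\<close> by (cases z; cases w) (auto simp: between_def)
  ultimately have "?m \<in> I"
    using assms u v unfolding slices_convex_def by blast
  with \<open>mdeg ?m = j\<close> have "?m \<in> comp I j"
    unfolding comp_def using mdvd_refl by blast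
  with w show "\<exists>w. u w < v w \<and> mulvar w (divvar z u) \<in> comp I j"
    by blast
qed

theorem cw_polymatroidal_iff_slices_convex: "cw_polymatroidal I \<longleftrightarrow> slices_convex I"
  using cw_polymatroidal_imp_slices_convex slices_convex_imp_cw_polymatroidal by blast

lemma slices_convex_shift_XY:
  assumes "slices_convex I" and "u \<in> I" "v \<in> I" "mdeg u = mdeg v" "v X < u X"
  shows "mulvar Y (divvar X u) \<in> I"
proof -
  have "mdeg (mulvar Y (divvar X u)) = mdeg u" "between (u X) (mulvar Y (divvar X u) X) (v X)"
    using assms(5) by (auto simp: between_def)
  with assms show ?thesis
    unfolding slices_convex_def by metis
qed

lemma mprod_split_same_degrees_le:
  assumes "slices_convex I" "slices_convex J"
    and "u1 \<in> I" "u2 \<in> I" "v1 \<in> J" "v2 \<in> J" "mdeg u1 = mdeg u2" "mdeg v1 = mdeg v2"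
    and "mdeg w = mdeg u1 + mdeg v1" "u1 X + v1 X \<le> w X" "w X \<le> u2 X + v2 X"
  shows "w \<in> mprod I J"
  using assms(4,6-8,11)
proof (induction "u2 X + v2 X - w X" arbitrary: u2 v2)
  case 0
  with assms(9) have "w = mmult u2 v2"
    by (intro mon_eq_if_mdeg_eq) (auto simp: mmult_apply)
  with "0.prems" show ?case
    by (simp add: mmult_mem_mprod)
next
  case (Suc g)
  show ?case
  proof (cases "u1 X < u2 X")
    case True
    let ?u = "mulvar Y (divvar X u2)"
    have "?u \<in> I"
      using slices_convex_shift_XY[OF assms(1) Suc.prems(1) assms(3) _ True] Suc.prems(3) by simp
    moreover have "mdeg ?u = mdeg u2" "?u X = u2 X - 1"
      using True by simp_all
    ultimately show ?thesis
      using Suc.hyps(2) Suc.prems True by (intro Suc.hyps(1)[of ?u v2]) simp_all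
  next
    case False
    then have "v1 X < v2 X"
      using Suc.hyps assms(10) by linarith
    let ?v = "mulvar Y (divvar X v2)"
    have "?v \<in> J"
      using slices_convex_shift_XY[OF assms(2) Suc.prems(2) assms(5) _ \<open>v1 X < v2 X\<close>] Suc.prems(4)
      by simp
    moreover have "mdeg ?v = mdeg v2" "?v X = v2 X - 1"
      using \<open>v1 X < v2 X\<close> by simp_all
    ultimately show ?thesis
      using Suc.hyps(2) Suc.prems \<open>v1 X < v2 X\<close> by (intro Suc.hyps(1)[of u2 ?v]) simp_all
  qed
qed

lemma mprod_split_same_degrees:
  assumes "slices_convex I" "slices_convex J"
    and "u1 \<in> I" "u2 \<in> I" "v1 \<in> J" "v2 \<in> J" "mdeg u1 = mdeg u2" "mdeg v1 = mdeg v2"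
    and "mdeg w = mdeg u1 + mdeg v1" "between (u1 X + v1 X) (w X) (u2 X + v2 X)"
  shows "w \<in> mprod I J"
proof (cases "u1 X + v1 X \<le> u2 X + v2 X")
  case True
  with assms show ?thesis
    by (intro mprod_split_same_degrees_le[of I J u1 u2 v1 v2]) (auto simp: between_def)
next
  case False
  with assms show ?thesis
    by (intro mprod_split_same_degrees_le[of I J u2 u1 v2 v1]) (auto simp: between_def)
qed

lemma mprod_split_between:
  assumes "mon_ideal I" "mon_ideal J" "slices_convex I" "slices_convex J"
    and "u1 \<in> I" "u2 \<in> I" "v1 \<in> J" "v2 \<in> J" "mdeg u1 \<le> mdeg u2"
    and "mdeg w = mdeg u1 + mdeg v1" "mdeg w = mdeg u2 + mdeg v2"
    and "between (u1 X + v1 X) (w X) (u2 X + v2 X)"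
  shows "w \<in> mprod I J"
  using assms(5-12)
proof (induction "mdeg u2 - mdeg u1" arbitrary: u1 v1 rule: less_induct)
  case less
  show ?case
  proof (cases "mdeg u1 = mdeg u2")
    case True
    with less.prems show ?thesis
      by (intro mprod_split_same_degrees[OF assms(3,4), of u1 u2 v1 v2]) auto
  next
    case False
    define v' where "v' = v2(Y := v2 Y + (mdeg v1 - 1 - mdeg v2))"
    have "v' \<in> J"
      using assms(2) less.prems unfolding mon_ideal_def v'_def mdvd_def by auto
    have deg_v': "mdeg v' = mdeg v1 - 1"
      using False less.prems unfolding v'_def mdeg_def by auto
    have "between (u1 X + v1 X) (w X) (u1 X + mulvar X v' X) \<or>
          between (mulvar X u1 X + v' X) (w X) (u2 X + v2 X)"
      using less.prems(8) unfolding between_def by (auto simp: v'_def)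
    then show ?thesis
    proof
      assume "between (u1 X + v1 X) (w X) (u1 X + mulvar X v' X)"
      moreover have "mulvar X v' \<in> J"
        using assms(2) \<open>v' \<in> J\<close> by (rule mon_ideal_mulvar)
      moreover have "mdeg (mulvar X v') = mdeg v1"
        using False less.prems deg_v' by (simp add: mdeg_mulvar)
      ultimately show ?thesis
        using mprod_split_same_degrees[OF assms(3,4) less.prems(1,1,3), of "mulvar X v'" w]
          less.prems(6) by simp
    next
      assume "between (mulvar X u1 X + v' X) (w X) (u2 X + v2 X)"
      moreover have "mulvar X u1 \<in> I"
        using assms(1) less.prems(1) by (rule mon_ideal_mulvar)
      ultimately show ?thesis
        using less.hyps[of "mulvar X u1" v'] False less.prems \<open>v' \<in> J\<close> deg_v' by (auto simp: mdeg_mulvar)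
    qed
  qed
qed

lemma slices_convex_mprod:
  assumes "mon_ideal I" "mon_ideal J" "slices_convex I" "slices_convex J"
  shows "slices_convex (mprod I J)"
  unfolding slices_convex_def
proof (intro ballI allI impI)
  fix w1 w2 w assume w1: "w1 \<in> mprod I J" and w2: "w2 \<in> mprod I J"
    and deg: "mdeg w1 = mdeg w" "mdeg w2 = mdeg w" and "between (w1 X) (w X) (w2 X)"
  obtain u1 v1 where uv1: "u1 \<in> I" "v1 \<in> J" "w1 = mmult u1 v1"
    using mprod_memE[OF assms(1) w1] .
  obtain u2 v2 where uv2: "u2 \<in> I" "v2 \<in> J" "w2 = mmult u2 v2"
    using mprod_memE[OF assms(1) w2] .
  have deg_w: "mdeg w = mdeg u1 + mdeg v1" "mdeg w = mdeg u2 + mdeg v2"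
    using deg uv1 uv2 by simp_all
  have between_w: "between (u1 X + v1 X) (w X) (u2 X + v2 X)"
    using \<open>between (w1 X) (w X) (w2 X)\<close> uv1 uv2 by (simp add: mmult_apply)
  show "w \<in> mprod I J"
  proof (cases "mdeg u1 \<le> mdeg u2")
    case True
    with between_w show ?thesis
      using mprod_split_between[OF assms uv1(1) uv2(1) uv1(2) uv2(2) _ deg_w] by blast
  next
    case False
    with between_w show ?thesis
      using mprod_split_between[OF assms uv2(1) uv1(1) uv2(2) uv1(2) _ deg_w(2,1)]
      by (simp add: between_sym)
  qed
qed

lemma mon_ideal_slices_convex_mpow:
  assumes "mon_ideal I" "slices_convex I"
  shows "mon_ideal (mpow I n) \<and> slices_convex (mpow I n)"
proof (induction n)
  case 0
  show ?case
    by (simp add: mon_ideal_UNIV slices_convex_def)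
next
  case (Suc n)
  then show ?case
    using assms slices_convex_mprod mon_ideal_mprod by simp
qed

theorem corollary2p13:
  assumes "mon_ideal I" and "mon_ideal J"
    and "cw_polymatroidal I" and "cw_polymatroidal J"
  shows "cw_polymatroidal (mprod I J) \<and> (\<forall>n. cw_polymatroidal (mpow I n))"
  using assms slices_convex_mprod mon_ideal_slices_convex_mpow
  by (simp add: cw_polymatroidal_iff_slices_convex)

end
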